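(* Let $F$ be a Boolean formula over $n$ variables and let $1\le m\le n$. If $|\mathrm{Sol}(F)| \le 2^{m-2}$, then $\varphi_{stock}^F(m)$ is true.
   Context: $\mathrm{Sol}(F)\subseteq\{0,1\}^n$ denotes the set of satisfying assignments of $F$. For $n,m,k\ge 1$, $\mathcal{H}(n,m,k)$ denotes a fixed explicit $k$-wise independent family of hash functions $\{0,1\}^n\to\{0,1\}^m$: for $h$ drawn uniformly from $\mathcal{H}(n,m,k)$, all distinct $y_1,\dots,y_k\in\{0,1\}^n$ and all $\alpha_1,\dots,\alpha_k\in\{0,1\}^m$, $\Pr[h(y_1)=\alpha_1\wedge\cdots\wedge h(y_k)=\alpha_k]=2^{-mk}$. The statement $\varphi_{stock}^F(m)$ means: there exist $h_1,\dots,h_m\in\mathcal{H}(n,m,2)$ such that for every $z_1\in\mathrm{Sol}(F)$ there is an index $i\in\{1,\dots,m\}$ such that no $z_2\in\mathrm{Sol}(F)$ with $z_2\neq z_1$ satisfies $h_i(z_2)=h_i(z_1)$. *)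

theory Defs
  imports Complex_Main
begin

text \<open>Boolean formulas over propositional variables indexed by natural numbers.
  An assignment in {0,1}^n is a bool list of length n (variable i is position i).\<close>

datatype form = FVar nat | FTrue | FFalse | FNot form | FAnd form form | FOr form form

fun fvars :: "form \<Rightarrow> nat set" where
  "fvars (FVar i) = {i}"
| "fvars FTrue = {}"
| "fvars FFalse = {}"
| "fvars (FNot f) = fvars f"
| "fvars (FAnd f g) = fvars f \<union> fvars g"
| "fvars (FOr f g) = fvars f \<union> fvars g"

fun feval :: "bool list \<Rightarrow> form \<Rightarrow> bool" where
  "feval x (FVar i) = x ! i"
| "feval x FTrue = True"
| "feval x FFalse = False"
| "feval x (FNot f) = (\<not> feval x f)"
| "feval x (FAnd f g) = (feval x f \<and> feval x g)"
| "feval x (FOr f g) = (feval x f \<or> feval x g)"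

definition formula_over :: "nat \<Rightarrow> form \<Rightarrow> bool" where
  "formula_over n F \<longleftrightarrow> fvars F \<subseteq> {..<n}"

definition Sol :: "nat \<Rightarrow> form \<Rightarrow> bool list set" where
  "Sol n F = {x. length x = n \<and> feval x F}"

definition kwise_indep_family ::
  "(bool list \<Rightarrow> bool list) set \<Rightarrow> nat \<Rightarrow> nat \<Rightarrow> nat \<Rightarrow> bool" where
  "kwise_indep_family H n m k \<longleftrightarrow>
     finite H \<and> H \<noteq> {} \<and>
     (\<forall>h\<in>H. \<forall>y. length y = n \<longrightarrow> length (h y) = m) \<and>
     (\<forall>ys as. length ys = k \<and> distinct ys \<and> (\<forall>y\<in>set ys. length y = n) \<and>
        length as = k \<and> (\<forall>a\<in>set as. length a = m) \<longrightarrow>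
        real (card {h\<in>H. \<forall>i<k. h (ys ! i) = as ! i}) / real (card H)
          = 2 powr (- real (m * k)))"

definition phi_stock ::
  "(bool list \<Rightarrow> bool list) set \<Rightarrow> nat \<Rightarrow> form \<Rightarrow> nat \<Rightarrow> bool" where
  "phi_stock H n F m \<longleftrightarrow>
     (\<exists>hs. length hs = m \<and> set hs \<subseteq> H \<and>
        (\<forall>z1\<in>Sol n F. \<exists>i<m. \<not> (\<exists>z2\<in>Sol n F. z2 \<noteq> z1 \<and> (hs ! i) z2 = (hs ! i) z1)))"

end

theory Submission
  imports Defs
begin

text \<open>For two distinct solutions, pairwise independence makes a hash function drawn from \<open>H\<close>
  map them to the same value with probability \<open>2^-m\<close>. By a union bound, the expected number of
  elements of a set \<open>R\<close> of solutions that collide with some other solution is at most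
  \<open>|R| (|Sol| - 1) / 2^m \<le> |R| / 2\<close> once \<open>|Sol| \<le> 2^(m-1)\<close>. So hash functions can be chosen
  greedily, each at least halving the set of solutions not yet isolated by an earlier one; since
  \<open>|Sol| < 2^m\<close>, after \<open>m\<close> choices every solution is isolated by one of them.\<close>

definition collides :: "'a set \<Rightarrow> ('a \<Rightarrow> 'b) \<Rightarrow> 'a \<Rightarrow> bool" where
  "collides S h z \<longleftrightarrow> (\<exists>z'\<in>S. z' \<noteq> z \<and> h z' = h z)"

lemma sum_card_filter_swap:
  assumes "finite A" "finite B"
  shows "(\<Sum>a\<in>A. card {b\<in>B. P a b}) = (\<Sum>b\<in>B. card {a\<in>A. P a b})"
proof -
  have "(\<Sum>a\<in>A. card {b\<in>B. P a b}) = (\<Sum>a\<in>A. \<Sum>b\<in>B. of_bool (P a b))"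
    using assms(2) by (simp add: Int_def)
  also have "\<dots> = (\<Sum>b\<in>B. \<Sum>a\<in>A. of_bool (P a b))"
    by (rule sum.swap)
  also have "\<dots> = (\<Sum>b\<in>B. card {a\<in>A. P a b})"
    using assms(1) by (simp add: Int_def)
  finally show ?thesis .
qed

lemma card_collides_le:
  assumes "finite R" "finite S"
  shows "card {z\<in>R. collides S h z} \<le> (\<Sum>z\<in>R. card {z'\<in>S - {z}. h z' = h z})"
proof -
  have "card {z\<in>R. collides S h z} = (\<Sum>z\<in>R. of_bool (collides S h z))"
    using assms(1) by (simp add: Int_def)
  also have "\<dots> \<le> (\<Sum>z\<in>R. card {z'\<in>S - {z}. h z' = h z})"
  proof (rule sum_mono)
    fix z
    show "of_bool (collides S h z) \<le> card {z'\<in>S - {z}. h z' = h z}"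
      using assms(2) by (auto simp: collides_def card_gt_0_iff Suc_le_eq)
  qed
  finally show ?thesis .
qed

lemma exists_hash_few_collisions:
  fixes H :: "('a \<Rightarrow> 'b) set" and N :: nat
  assumes "finite H" "H \<noteq> {}" "finite S" "R \<subseteq> S"
    and collision_bound:
      "\<And>y y'. y \<in> S \<Longrightarrow> y' \<in> S \<Longrightarrow> y \<noteq> y' \<Longrightarrow> card {h\<in>H. h y = h y'} * N \<le> card H"
  shows "\<exists>h\<in>H. card {z\<in>R. collides S h z} * N \<le> card R * (card S - 1)"
proof (rule ccontr)
  assume no_good_hash: "\<not> ?thesis"
  have "finite R"
    using assms(3,4) by (rule finite_subset[rotated])
  have "card H * (card R * (card S - 1)) < (\<Sum>h\<in>H. card {z\<in>R. collides S h z} * N)"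
    using no_good_hash sum_strict_mono[of H "\<lambda>_. card R * (card S - 1)"] assms(1,2)
    by (simp add: not_le)
  also have "\<dots> \<le> (\<Sum>h\<in>H. \<Sum>z\<in>R. card {z'\<in>S - {z}. h z' = h z} * N)"
    unfolding sum_distrib_right[symmetric]
    by (intro sum_mono mult_right_mono card_collides_le[OF \<open>finite R\<close> assms(3)]) simp
  also have "\<dots> = (\<Sum>z\<in>R. \<Sum>z'\<in>S - {z}. card {h\<in>H. h z' = h z} * N)"
  proof -
    have "(\<Sum>h\<in>H. \<Sum>z\<in>R. card {z'\<in>S - {z}. h z' = h z} * N)
        = (\<Sum>z\<in>R. (\<Sum>h\<in>H. card {z'\<in>S - {z}. h z' = h z}) * N)"
      by (subst sum.swap) (simp only: sum_distrib_right)
    also have "\<dots> = (\<Sum>z\<in>R. (\<Sum>z'\<in>S - {z}. card {h\<in>H. h z' = h z}) * N)"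
      using assms(1,3) by (intro sum.cong refl, subst sum_card_filter_swap) auto
    finally show ?thesis
      by (simp only: sum_distrib_right)
  qed
  also have "\<dots> \<le> (\<Sum>z\<in>R. \<Sum>z'\<in>S - {z}. card H)"
    using assms(4) by (intro sum_mono collision_bound) auto
  also have "\<dots> = card H * (card R * (card S - 1))"
    using assms(3,4) by (simp add: card_Diff_singleton subset_iff)
  finally show False
    by simp
qed

lemma exists_isolating_hashes_if_halving:
  assumes "finite S"
    and halving: "\<And>R. R \<subseteq> S \<Longrightarrow> \<exists>h\<in>H. card {z\<in>R. collides S h z} * 2 \<le> card R"
    and "card S < 2 ^ k"
  shows "\<exists>hs. length hs = k \<and> set hs \<subseteq> H \<and> (\<forall>z\<in>S. \<exists>i<k. \<not> collides S (hs ! i) z)"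
proof -
  have "\<exists>hs. length hs = j \<and> set hs \<subseteq> H \<and>
          card {z\<in>S. \<forall>i<j. collides S (hs ! i) z} * 2 ^ j \<le> card S" for j
  proof (induction j)
    case 0
    show ?case
      using \<open>finite S\<close> by (intro exI[of _ "[]"]) (simp add: card_mono)
  next
    case (Suc j)
    then obtain hs where hs: "length hs = j" "set hs \<subseteq> H"
      and bound: "card {z\<in>S. \<forall>i<j. collides S (hs ! i) z} * 2 ^ j \<le> card S"
      by blast
    define R where "R = {z\<in>S. \<forall>i<j. collides S (hs ! i) z}"
    obtain h where "h \<in> H" and h: "card {z\<in>R. collides S h z} * 2 \<le> card R"
      using halving[of R] unfolding R_def by blast
    have "{z\<in>S. \<forall>i<Suc j. collides S ((hs @ [h]) ! i) z} = {z\<in>R. collides S h z}"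
      using hs(1) by (auto simp: R_def less_Suc_eq nth_append)
    then have "card {z\<in>S. \<forall>i<Suc j. collides S ((hs @ [h]) ! i) z} * 2 ^ Suc j
        = card {z\<in>R. collides S h z} * 2 * 2 ^ j"
      by simp
    also have "\<dots> \<le> card R * 2 ^ j"
      using h by simp
    also have "\<dots> \<le> card S"
      using bound unfolding R_def .
    finally show ?case
      using hs \<open>h \<in> H\<close> by (intro exI[of _ "hs @ [h]"]) simp
  qed
  then obtain hs where hs: "length hs = k" "set hs \<subseteq> H"
    and bound: "card {z\<in>S. \<forall>i<k. collides S (hs ! i) z} * 2 ^ k \<le> card S"
    by blast
  with \<open>card S < 2 ^ k\<close> have "card {z\<in>S. \<forall>i<k. collides S (hs ! i) z} = 0"
    by (cases "card {z\<in>S. \<forall>i<k. collides S (hs ! i) z}") auto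
  then have "\<forall>z\<in>S. \<exists>i<k. \<not> collides S (hs ! i) z"
    using \<open>finite S\<close> by auto
  with hs show ?thesis
    by blast
qed

lemma kwise_indep_familyD:
  assumes "kwise_indep_family H n m k"
    and "length ys = k" "distinct ys" "\<forall>y\<in>set ys. length y = n"
    and "length as = k" "\<forall>a\<in>set as. length a = m"
  shows "real (card {h\<in>H. \<forall>i<k. h (ys ! i) = as ! i}) / real (card H) = 2 powr (- real (m * k))"
  using assms unfolding kwise_indep_family_def by blast

lemma kwise_indep_family_card_pair:
  assumes "kwise_indep_family H n m 2"
    and "length y = n" "length y' = n" "y \<noteq> y'" "length a = m" "length a' = m"
  shows "card {h\<in>H. h y = a \<and> h y' = a'} * 4 ^ m = card H"
proof -
  have "finite H" "H \<noteq> {}"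
    using assms(1) by (simp_all add: kwise_indep_family_def)
  have "{h\<in>H. \<forall>i<2. h ([y, y'] ! i) = [a, a'] ! i} = {h\<in>H. h y = a \<and> h y' = a'}"
    by (auto simp: less_2_cases_iff)
  moreover have "real (card {h\<in>H. \<forall>i<2. h ([y, y'] ! i) = [a, a'] ! i}) / real (card H)
      = 2 powr (- real (m * 2))"
    using assms by (intro kwise_indep_familyD) auto
  moreover have "(2::real) powr (- real (m * 2)) = 1 / 4 ^ m"
  proof -
    have "(2::real) powr real (m * 2) = 2 ^ (m * 2)"
      by (rule powr_realpow) simp
    also have "\<dots> = 4 ^ m"
      by (simp add: mult.commute[of m] power_mult)
    finally show ?thesis
      by (simp add: powr_minus divide_inverse)
  qed
  ultimately have "real (card {h\<in>H. h y = a \<and> h y' = a'} * 4 ^ m) = real (card H)"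
    using \<open>finite H\<close> \<open>H \<noteq> {}\<close> by (simp add: field_simps card_gt_0_iff)
  then show ?thesis
    by (simp only: of_nat_eq_iff)
qed

lemma kwise_indep_family_card_collision:
  assumes "kwise_indep_family H n m 2" and "length y = n" "length y' = n" "y \<noteq> y'"
  shows "card {h\<in>H. h y = h y'} * 2 ^ m = card H"
proof -
  define A where "A = {a::bool list. length a = m}"
  have "finite A" "card A = 2 ^ m"
    using finite_lists_length_eq[of "UNIV :: bool set" m] card_lists_length_eq[of "UNIV :: bool set" m]
    by (simp_all add: A_def)
  have "finite H" and hash_length: "\<And>h. h \<in> H \<Longrightarrow> length (h y) = m"
    using assms(1,2) by (simp_all add: kwise_indep_family_def)
  have "{h\<in>H. h y = h y'} = (\<Union>a\<in>A. {h\<in>H. h y = a \<and> h y' = a})"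
  proof (intro equalityI subsetI)
    fix h
    assume "h \<in> {h\<in>H. h y = h y'}"
    then show "h \<in> (\<Union>a\<in>A. {h\<in>H. h y = a \<and> h y' = a})"
      using hash_length[of h] unfolding A_def by (intro UN_I[of "h y"]) auto
  qed auto
  then have "card {h\<in>H. h y = h y'} = (\<Sum>a\<in>A. card {h\<in>H. h y = a \<and> h y' = a})"
    using \<open>finite A\<close> \<open>finite H\<close> by (simp only:) (rule card_UN_disjoint, auto)
  then have "card {h\<in>H. h y = h y'} * 4 ^ m = 2 ^ m * card H"
    using kwise_indep_family_card_pair[OF assms] \<open>card A = 2 ^ m\<close>
    by (simp add: sum_distrib_right A_def)
  moreover have "(4::nat) ^ m = 2 ^ m * 2 ^ m"
    by (simp flip: power_mult_distrib)
  ultimately show ?thesis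
    by simp
qed

lemma kwise_indep_family_halving:
  assumes "kwise_indep_family H n m 2" "finite S" "\<forall>z\<in>S. length z = n" "card S * 2 \<le> 2 ^ m"
    and "R \<subseteq> S"
  shows "\<exists>h\<in>H. card {z\<in>R. collides S h z} * 2 \<le> card R"
proof -
  have "finite H" "H \<noteq> {}"
    using assms(1) by (simp_all add: kwise_indep_family_def)
  then obtain h where "h \<in> H" and h: "card {z\<in>R. collides S h z} * 2 ^ m \<le> card R * (card S - 1)"
    using exists_hash_few_collisions[OF _ _ \<open>finite S\<close> \<open>R \<subseteq> S\<close>, of H "2 ^ m"]
      kwise_indep_family_card_collision[OF assms(1)] assms(3)
    by auto
  have "card {z\<in>R. collides S h z} * 2 * 2 ^ m \<le> card R * ((card S - 1) * 2)"
    using h by simp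
  also have "\<dots> \<le> card R * 2 ^ m"
    using assms(4) by (intro mult_left_mono) auto
  finally show ?thesis
    using \<open>h \<in> H\<close> by auto
qed

lemma kwise_indep_family_exists_isolating_hashes:
  assumes "kwise_indep_family H n m 2" "finite S" "\<forall>z\<in>S. length z = n" "card S * 2 \<le> 2 ^ m"
  shows "\<exists>hs. length hs = m \<and> set hs \<subseteq> H \<and> (\<forall>z\<in>S. \<exists>i<m. \<not> collides S (hs ! i) z)"
proof (rule exists_isolating_hashes_if_halving)
  show "finite S"
    by fact
  show "\<exists>h\<in>H. card {z\<in>R. collides S h z} * 2 \<le> card R" if "R \<subseteq> S" for R
    using kwise_indep_family_halving[OF assms that] .
  have "0 < (2::nat) ^ m"
    by simp
  then show "card S < 2 ^ m"
    using assms(4) by linarith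
qed

lemma finite_Sol: "finite (Sol n F)"
  using finite_lists_length_eq[of "UNIV :: bool set" n]
  by (rule finite_subset[rotated]) (auto simp: Sol_def)

theorem lemma3p2:
  fixes H :: "(bool list \<Rightarrow> bool list) set" and n m :: nat and F :: form
  assumes "kwise_indep_family H n m 2"
    and "formula_over n F"
    and "1 \<le> m" and "m \<le> n"
    and "real (card (Sol n F)) \<le> 2 powr (real m - 2)"
  shows "phi_stock H n F m"
proof -
  have "2 powr (real m - 2) = (2::real) ^ m / 4"
    by (simp add: powr_diff powr_realpow)
  then have "real (card (Sol n F) * 4) \<le> real (2 ^ m)"
    using assms(5) by simp
  then have "card (Sol n F) * 2 \<le> 2 ^ m"
    by (simp only: of_nat_le_iff)
  moreover have "\<forall>z\<in>Sol n F. length z = n"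
    by (simp add: Sol_def)
  ultimately obtain hs where "length hs = m" "set hs \<subseteq> H"
    and "\<forall>z\<in>Sol n F. \<exists>i<m. \<not> collides (Sol n F) (hs ! i) z"
    using kwise_indep_family_exists_isolating_hashes[OF assms(1) finite_Sol] by blast
  then show ?thesis
    unfolding phi_stock_def collides_def by auto
qed

end
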